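(* The steady-state download time in the FJ-SM system stochastically dominates those in the FJ-FA and FJ-GA systems (all with the same arrival rate, storage code and service model): for all $x\ge 0$, $\Pr\{T_{\text{FJ-GA}} > x\} \le \Pr\{T_{\text{FJ-SM}} > x\}$ and $\Pr\{T_{\text{FJ-FA}} > x\} \le \Pr\{T_{\text{FJ-SM}} > x\}$.
   Context: Storage model: $k$ objects $f_1,\dots,f_k$ are encoded by a systematic $(n,k)$ linear code on $n$ servers with $(r,t)$-availability: for each systematic server $i$ there are $t$ pairwise disjoint recovery groups of $r$ servers from any one of which $f_i$ can be recovered. Requests arrive as a Poisson process of rate $\lambda$. Fork-Join access: a request for $f_i$ is replicated into one copy at systematic server $i$ and one at each of its $t$ recovery groups; a recovery-group copy is forked into $r$ sub-copies (one per server of the group) and completes when all finish; the request completes when its systematic copy finishes or some recovery-group copy completes, and all its outstanding copies/sub-copies are then removed immediately. Each server has a FCFS queue; service times are independent, each $\mathrm{Exp}(\mu)$. FJ-GA: each request independently asks for $f_i$ with probability $p_i$. FJ-FA: every request asks for the same object. FJ-SM: requests wait in a centralized FCFS queue and the request at its head is admitted to the servers (and served by the Fork-Join scheme) only when all servers are idle. Download time is departure minus arrival time, in steady state; the systems are assumed stable. *)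

theory Defs
  imports "HOL-Probability.Probability"
begin

text \<open>Servers are numbered 0..n-1, objects 0..k-1; server i < k is the systematic
server storing f_i.  The code is given by a k x n generator matrix G over a field
(column s = coded symbol stored at server s, as a linear combination of f_0..f_(k-1)).
rg i g (g < t) is the g-th recovery group of object i.\<close>

definition systematic_code :: "nat \<Rightarrow> nat \<Rightarrow> (nat \<Rightarrow> nat \<Rightarrow> 'f::field) \<Rightarrow> bool" where
  "systematic_code n k G \<longleftrightarrow> 0 < k \<and> k \<le> n \<and>
     (\<forall>i<k. \<forall>s<k. G i s = (if i = s then 1 else 0))"

definition recovers :: "nat \<Rightarrow> (nat \<Rightarrow> nat \<Rightarrow> 'f::field) \<Rightarrow> nat \<Rightarrow> nat set \<Rightarrow> bool" where
  "recovers k G i R \<longleftrightarrow> (\<exists>a. \<forall>l<k. (\<Sum>s\<in>R. a s * G l s) = (if l = i then 1 else 0))"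

definition rt_availability ::
  "nat \<Rightarrow> nat \<Rightarrow> (nat \<Rightarrow> nat \<Rightarrow> 'f::field) \<Rightarrow> nat \<Rightarrow> nat \<Rightarrow> (nat \<Rightarrow> nat \<Rightarrow> nat set) \<Rightarrow> bool" where
  "rt_availability n k G r t rg \<longleftrightarrow>
     (\<forall>i<k. \<forall>g<t. rg i g \<subseteq> {..<n} \<and> card (rg i g) = r \<and> i \<notin> rg i g \<and> recovers k G i (rg i g)) \<and>
     (\<forall>i<k. \<forall>g<t. \<forall>h<t. g \<noteq> h \<longrightarrow> rg i g \<inter> rg i h = {})"

text \<open>Deterministic dynamics given arrival times a j, service requirements sv j s of
the (sub-)copy of request j at server s, and requested objects c j.
av s = time at which server s has been left by all copies of earlier requests
(FCFS).\<close>

definition fj_fin :: "(nat \<Rightarrow> real) \<Rightarrow> (nat \<Rightarrow> nat \<Rightarrow> real) \<Rightarrow> (nat \<Rightarrow> real) \<Rightarrow> nat \<Rightarrow> nat \<Rightarrow> real" where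
  "fj_fin a sv av j s = max (a j) (av s) + sv j s"

definition fj_dep :: "(nat \<Rightarrow> nat \<Rightarrow> nat set) \<Rightarrow> nat \<Rightarrow> (nat \<Rightarrow> real) \<Rightarrow> (nat \<Rightarrow> nat \<Rightarrow> real)
    \<Rightarrow> (nat \<Rightarrow> nat) \<Rightarrow> (nat \<Rightarrow> real) \<Rightarrow> nat \<Rightarrow> real" where
  "fj_dep rg t a sv c av j =
     min (fj_fin a sv av j (c j)) (MIN g\<in>{..<t}. MAX s\<in>rg (c j) g. fj_fin a sv av j s)"

definition copies :: "(nat \<Rightarrow> nat \<Rightarrow> nat set) \<Rightarrow> nat \<Rightarrow> nat \<Rightarrow> nat set" where
  "copies rg t i = insert i (\<Union>g<t. rg i g)"

primrec fj_avail :: "(nat \<Rightarrow> nat \<Rightarrow> nat set) \<Rightarrow> nat \<Rightarrow> (nat \<Rightarrow> real) \<Rightarrow> (nat \<Rightarrow> nat \<Rightarrow> real)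
    \<Rightarrow> (nat \<Rightarrow> nat) \<Rightarrow> nat \<Rightarrow> nat \<Rightarrow> real" where
  "fj_avail rg t a sv c 0 = (\<lambda>s. 0)"
| "fj_avail rg t a sv c (Suc j) = (\<lambda>s.
     if s \<in> copies rg t (c j)
     then max (fj_avail rg t a sv c j s)
              (min (fj_dep rg t a sv c (fj_avail rg t a sv c j) j) (fj_fin a sv (fj_avail rg t a sv c j) j s))
     else fj_avail rg t a sv c j s)"

definition fj_depart :: "(nat \<Rightarrow> nat \<Rightarrow> nat set) \<Rightarrow> nat \<Rightarrow> (nat \<Rightarrow> real) \<Rightarrow> (nat \<Rightarrow> nat \<Rightarrow> real)
    \<Rightarrow> (nat \<Rightarrow> nat) \<Rightarrow> nat \<Rightarrow> real" where
  "fj_depart rg t a sv c j = fj_dep rg t a sv c (fj_avail rg t a sv c j) j"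

text \<open>FJ-SM: the head-of-line request is admitted only when all servers are idle,
i.e. when the previous request has departed; it then starts on all its servers at
max (arrival) (previous departure).\<close>
primrec sm_free :: "(nat \<Rightarrow> nat \<Rightarrow> nat set) \<Rightarrow> nat \<Rightarrow> (nat \<Rightarrow> real) \<Rightarrow> (nat \<Rightarrow> nat \<Rightarrow> real)
    \<Rightarrow> (nat \<Rightarrow> nat) \<Rightarrow> nat \<Rightarrow> real" where
  "sm_free rg t a sv c 0 = 0"
| "sm_free rg t a sv c (Suc j) = fj_dep rg t a sv c (\<lambda>_. sm_free rg t a sv c j) j"

definition sm_depart :: "(nat \<Rightarrow> nat \<Rightarrow> nat set) \<Rightarrow> nat \<Rightarrow> (nat \<Rightarrow> real) \<Rightarrow> (nat \<Rightarrow> nat \<Rightarrow> real)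
    \<Rightarrow> (nat \<Rightarrow> nat) \<Rightarrow> nat \<Rightarrow> real" where
  "sm_depart rg t a sv c j = fj_dep rg t a sv c (\<lambda>_. sm_free rg t a sv c j) j"

definition arrivals :: "(nat \<Rightarrow> 'w \<Rightarrow> real) \<Rightarrow> 'w \<Rightarrow> nat \<Rightarrow> real" where
  "arrivals X \<omega> j = (\<Sum>m\<le>j. X m \<omega>)"

definition fj_time :: "(nat \<Rightarrow> nat \<Rightarrow> nat set) \<Rightarrow> nat \<Rightarrow> (nat \<Rightarrow> 'w \<Rightarrow> real)
    \<Rightarrow> (nat \<Rightarrow> nat \<Rightarrow> 'w \<Rightarrow> real) \<Rightarrow> (nat \<Rightarrow> 'w \<Rightarrow> nat) \<Rightarrow> nat \<Rightarrow> 'w \<Rightarrow> real" where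
  "fj_time rg t X S C j \<omega> =
     fj_depart rg t (arrivals X \<omega>) (\<lambda>j s. S j s \<omega>) (\<lambda>j. C j \<omega>) j - arrivals X \<omega> j"

definition sm_time :: "(nat \<Rightarrow> nat \<Rightarrow> nat set) \<Rightarrow> nat \<Rightarrow> (nat \<Rightarrow> 'w \<Rightarrow> real)
    \<Rightarrow> (nat \<Rightarrow> nat \<Rightarrow> 'w \<Rightarrow> real) \<Rightarrow> (nat \<Rightarrow> 'w \<Rightarrow> nat) \<Rightarrow> nat \<Rightarrow> 'w \<Rightarrow> real" where
  "sm_time rg t X S C j \<omega> =
     sm_depart rg t (arrivals X \<omega>) (\<lambda>j s. S j s \<omega>) (\<lambda>j. C j \<omega>) j - arrivals X \<omega> j"

datatype rv_idx = Inter nat | Serv nat nat | Kind nat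

definition prim_family :: "(nat \<Rightarrow> 'w \<Rightarrow> real) \<Rightarrow> (nat \<Rightarrow> nat \<Rightarrow> 'w \<Rightarrow> real)
    \<Rightarrow> (nat \<Rightarrow> 'w \<Rightarrow> nat) \<Rightarrow> rv_idx \<Rightarrow> 'w \<Rightarrow> real" where
  "prim_family X S C i \<omega> = (case i of Inter j \<Rightarrow> X j \<omega> | Serv j s \<Rightarrow> S j s \<omega> | Kind j \<Rightarrow> real (C j \<omega>))"

definition steady_tail :: "'w measure \<Rightarrow> (nat \<Rightarrow> 'w \<Rightarrow> real) \<Rightarrow> real \<Rightarrow> real" where
  "steady_tail M T x = lim (\<lambda>j. measure M {\<omega> \<in> space M. T j \<omega> > x})"

definition has_steady_state :: "'w measure \<Rightarrow> (nat \<Rightarrow> 'w \<Rightarrow> real) \<Rightarrow> bool" where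
  "has_steady_state M T \<longleftrightarrow> (\<forall>x\<ge>0. convergent (\<lambda>j. measure M {\<omega> \<in> space M. T j \<omega> > x}))"

end

theory Submission
  imports Defs
begin

(* Feed FJ and FJ-SM the same arrivals, service requirements and requested objects.  By induction
   over the requests, every server of FJ is released no later than the instant at which FJ-SM
   admits the next request, so with nonnegative service times every FJ request departs no later
   than under FJ-SM.  This is already the bound for FJ-GA; for FJ-FA it compares with FJ-SM in which
   all requests ask for i0.  It remains to see that the FJ-SM download time has the same law
   whatever objects are requested.  In FJ-SM all copies of a request start together, and a
   bijection from the copies of object i0 onto those of object c that maps recovery groups onto
   recovery groups turns a request for c into a request for i0.  The service times are i.i.d. and
   independent of the arrivals and of the requested objects, so conditioning on the requested
   objects gives the same tail as when every request asks for i0. *)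

section \<open>Sample-path comparison\<close>

lemma Max_image_mono:
  fixes f g :: "'a \<Rightarrow> 'b::linorder"
  assumes "finite A" "A \<noteq> {}" "\<And>x. x \<in> A \<Longrightarrow> f x \<le> g x"
  shows "(MAX x\<in>A. f x) \<le> (MAX x\<in>A. g x)"
  using assms by (auto simp: Max_le_iff intro: order.trans[OF _ Max_ge])

lemma Min_image_mono:
  fixes f g :: "'a \<Rightarrow> 'b::linorder"
  assumes "finite A" "A \<noteq> {}" "\<And>x. x \<in> A \<Longrightarrow> f x \<le> g x"
  shows "(MIN x\<in>A. f x) \<le> (MIN x\<in>A. g x)"
  using assms by (auto simp: Min_ge_iff intro: order.trans[OF Min_le])

definition fj_service :: "(nat \<Rightarrow> nat \<Rightarrow> nat set) \<Rightarrow> nat \<Rightarrow> (nat \<Rightarrow> nat \<Rightarrow> real) \<Rightarrow> (nat \<Rightarrow> nat) \<Rightarrow> nat \<Rightarrow> real" where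
  "fj_service rg t sv c j = min (sv j (c j)) (MIN g\<in>{..<t}. MAX s\<in>rg (c j) g. sv j s)"

definition finite_nonempty_groups :: "(nat \<Rightarrow> nat \<Rightarrow> nat set) \<Rightarrow> nat \<Rightarrow> nat \<Rightarrow> bool" where
  "finite_nonempty_groups rg t i \<longleftrightarrow> 0 < t \<and> (\<forall>g<t. finite (rg i g) \<and> rg i g \<noteq> {})"

lemma rt_availabilityD:
  assumes "rt_availability n k G r t rg" "i < k" "g < t"
  shows "finite (rg i g)" "card (rg i g) = r" "i \<notin> rg i g"
    and "\<And>h. h < t \<Longrightarrow> h \<noteq> g \<Longrightarrow> rg i g \<inter> rg i h = {}"
proof -
  have "rg i g \<subseteq> {..<n}"
    using assms unfolding rt_availability_def by blast
  then show "finite (rg i g)"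
    using finite_subset by blast
qed (use assms in \<open>auto simp: rt_availability_def\<close>)

lemma finite_nonempty_groups_if_availability:
  assumes "rt_availability n k G r t rg" "1 \<le> r" "1 \<le> t" "i < k"
  shows "finite_nonempty_groups rg t i"
  using rt_availabilityD[OF assms(1,4)] assms(2,3) unfolding finite_nonempty_groups_def
  by (metis card.empty not_one_le_zero less_le_trans zero_less_one)

lemma fj_dep_const_avail:
  assumes "finite_nonempty_groups rg t (c j)"
  shows "fj_dep rg t a sv c (\<lambda>_. F) j = max (a j) F + fj_service rg t sv c j"
proof -
  let ?b = "max (a j) F"
  have groups: "finite (rg (c j) g)" "rg (c j) g \<noteq> {}" if "g < t" for g
    using assms that by (auto simp: finite_nonempty_groups_def)
  have "(MAX s\<in>rg (c j) g. fj_fin a sv (\<lambda>_. F) j s) = (MAX s\<in>rg (c j) g. sv j s) + ?b" if "g < t" for g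
    unfolding fj_fin_def using groups[OF that] by (subst add.commute) (rule Max_add_commute)
  then have "(MIN g\<in>{..<t}. MAX s\<in>rg (c j) g. fj_fin a sv (\<lambda>_. F) j s)
      = (MIN g\<in>{..<t}. (MAX s\<in>rg (c j) g. sv j s) + ?b)"
    by (intro arg_cong[where f=Min] image_cong) auto
  also have "\<dots> = (MIN g\<in>{..<t}. MAX s\<in>rg (c j) g. sv j s) + ?b"
    using assms by (intro Min_add_commute) (auto simp: finite_nonempty_groups_def)
  finally show ?thesis
    unfolding fj_dep_def fj_service_def fj_fin_def by (simp add: min_add_distrib_right algebra_simps)
qed

lemma sm_free_Suc_eq:
  assumes "finite_nonempty_groups rg t (c j)"
  shows "sm_free rg t a sv c (Suc j) = max (a j) (sm_free rg t a sv c j) + fj_service rg t sv c j"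
  using fj_dep_const_avail[of rg t c j, OF assms] by simp

lemma fj_service_nonneg:
  assumes "finite_nonempty_groups rg t (c j)" "\<And>s. 0 \<le> sv j s"
  shows "0 \<le> fj_service rg t sv c j"
proof -
  have "0 \<le> (MAX s\<in>rg (c j) g. sv j s)" if "g < t" for g
    using assms that by (auto simp: finite_nonempty_groups_def Max_ge_iff)
  moreover have "{..<t} \<noteq> {}"
    using assms(1) by (auto simp: finite_nonempty_groups_def)
  ultimately show ?thesis
    using assms(2) unfolding fj_service_def by (simp add: Min_ge_iff)
qed

lemma fj_dep_mono:
  assumes "finite_nonempty_groups rg t (c j)" "\<And>s. av s \<le> av' s"
  shows "fj_dep rg t a sv c av j \<le> fj_dep rg t a sv c av' j"
proof -
  have fin_le: "fj_fin a sv av j s \<le> fj_fin a sv av' j s" for s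
    unfolding fj_fin_def using assms(2) by (simp add: max.coboundedI2 max.mono)
  then have "(MAX s\<in>rg (c j) g. fj_fin a sv av j s) \<le> (MAX s\<in>rg (c j) g. fj_fin a sv av' j s)" if "g < t" for g
    using assms(1) that by (intro Max_image_mono) (auto simp: finite_nonempty_groups_def)
  then have "(MIN g\<in>{..<t}. MAX s\<in>rg (c j) g. fj_fin a sv av j s)
      \<le> (MIN g\<in>{..<t}. MAX s\<in>rg (c j) g. fj_fin a sv av' j s)"
    using assms(1) by (intro Min_image_mono) (auto simp: finite_nonempty_groups_def)
  then show ?thesis
    unfolding fj_dep_def using fin_le by (meson min.mono)
qed

lemma fj_avail_le_sm_free:
  assumes groups: "\<And>j. finite_nonempty_groups rg t (c j)" and nonneg: "\<And>j s. 0 \<le> sv j s"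
  shows "fj_avail rg t a sv c j s \<le> sm_free rg t a sv c j"
proof (induction j arbitrary: s)
  case 0
  then show ?case by simp
next
  case (Suc j)
  have "fj_dep rg t a sv c (fj_avail rg t a sv c j) j \<le> sm_free rg t a sv c (Suc j)"
    using fj_dep_mono[of rg t c j, OF groups Suc.IH] by simp
  moreover have "sm_free rg t a sv c j \<le> sm_free rg t a sv c (Suc j)"
    using sm_free_Suc_eq[of rg t c j, OF groups] fj_service_nonneg[of rg t c j sv, OF groups nonneg] by simp
  ultimately show ?case
    using Suc.IH[of s] by (auto simp: min.coboundedI1)
qed

lemma fj_depart_le_sm_depart:
  assumes "\<And>j. finite_nonempty_groups rg t (c j)" "\<And>j s. 0 \<le> sv j s"
  shows "fj_depart rg t a sv c j \<le> sm_depart rg t a sv c j"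
  unfolding fj_depart_def sm_depart_def by (intro fj_dep_mono fj_avail_le_sm_free assms)

section \<open>Relabelling the servers\<close>

lemma ex_bij_betw_on_disjoint_family:
  assumes "disjoint_family_on A I" "\<And>g. g \<in> I \<Longrightarrow> bij_betw (h g) (A g) (B g)"
  obtains f where "\<And>g. g \<in> I \<Longrightarrow> bij_betw f (A g) (B g)"
proof -
  define f where "f s = h (SOME g. g \<in> I \<and> s \<in> A g) s" for s
  have "bij_betw f (A g) (B g)" if "g \<in> I" for g
  proof (rule bij_betw_cong[THEN iffD1, OF _ assms(2)[OF that]])
    fix s assume "s \<in> A g"
    then have "(SOME g. g \<in> I \<and> s \<in> A g) = g"
      using assms(1) that unfolding disjoint_family_on_def by (intro some_equality) auto
    then show "h g s = f s"
      unfolding f_def by simp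
  qed
  then show thesis ..
qed

definition copies_relabelling :: "(nat \<Rightarrow> nat \<Rightarrow> nat set) \<Rightarrow> nat \<Rightarrow> nat \<Rightarrow> nat \<Rightarrow> (nat \<Rightarrow> nat) \<Rightarrow> bool" where
  "copies_relabelling rg t i i' \<pi> \<longleftrightarrow>
     bij_betw \<pi> (copies rg t i) (copies rg t i') \<and> \<pi> i = i' \<and> (\<forall>g<t. \<pi> ` rg i g = rg i' g)"

lemma fj_service_relabel:
  assumes "copies_relabelling rg t i (c j) \<pi>" "\<And>s. s \<in> copies rg t i \<Longrightarrow> sv' j s = sv j (\<pi> s)"
  shows "fj_service rg t sv' (\<lambda>_. i) j = fj_service rg t sv c j"
proof -
  have "(MAX s\<in>rg i g. sv' j s) = (MAX s\<in>rg (c j) g. sv j s)" if "g < t" for g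
  proof -
    have "(\<lambda>s. sv' j s) ` rg i g = (\<lambda>s. sv j (\<pi> s)) ` rg i g"
      using assms(2) that unfolding copies_def by (intro image_cong) auto
    also have "\<dots> = (\<lambda>s. sv j s) ` rg (c j) g"
      using assms(1) that unfolding copies_relabelling_def by (metis image_image)
    finally show ?thesis by simp
  qed
  then show ?thesis
    using assms unfolding fj_service_def copies_relabelling_def copies_def by simp
qed

lemma sm_free_eq_by_service:
  assumes "\<And>m. m < j \<Longrightarrow> finite_nonempty_groups rg t (c m) \<and> finite_nonempty_groups rg t (c' m)"
    and "\<And>m. m < j \<Longrightarrow> a m = a' m \<and> fj_service rg t sv c m = fj_service rg t sv' c' m"
  shows "sm_free rg t a sv c j = sm_free rg t a' sv' c' j"
  using assms
proof (induction j)
  case 0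
  then show ?case by simp
next
  case (Suc j)
  then have "finite_nonempty_groups rg t (c j)" "finite_nonempty_groups rg t (c' j)"
    and "sm_free rg t a sv c j = sm_free rg t a' sv' c' j"
    by auto
  then show ?case
    using Suc.prems(2)[of j] by (simp add: sm_free_Suc_eq del: sm_free.simps)
qed

lemma ex_copies_relabelling:
  assumes avail: "rt_availability n k G r t rg" and "i < k" "i' < k"
  obtains \<pi> where "copies_relabelling rg t i i' \<pi>"
proof -
  define A where "A j g = (if g < t then rg j g else {j})" for j g
  have copies_eq: "copies rg t j = (\<Union>g\<le>t. A j g)" for j
    unfolding copies_def A_def by (auto simp: atMost_Suc less_Suc_eq_le[symmetric] lessThan_Suc_atMost[symmetric])
  have disj: "disjoint_family_on (A j) {..t}" if "j < k" for j
    using rt_availabilityD[OF avail that] unfolding disjoint_family_on_def A_def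
    by (auto simp: nat_less_le)
  have fin: "finite (A j g) \<and> card (A j g) = (if g < t then r else 1)" if "j < k" for j g
    using rt_availabilityD[OF avail that] unfolding A_def by auto
  have "\<forall>g. \<exists>h. bij_betw h (A i g) (A i' g)"
    using fin[OF \<open>i < k\<close>] fin[OF \<open>i' < k\<close>] by (metis finite_same_card_bij)
  then obtain h where "\<And>g. bij_betw (h g) (A i g) (A i' g)"
    by metis
  then obtain \<pi> where \<pi>: "\<And>g. g \<le> t \<Longrightarrow> bij_betw \<pi> (A i g) (A i' g)"
    using ex_bij_betw_on_disjoint_family[OF disj[OF \<open>i < k\<close>]] by (metis atMost_iff)
  have "copies_relabelling rg t i i' \<pi>"
    unfolding copies_relabelling_def copies_eq
  proof (intro conjI allI impI)
    show "bij_betw \<pi> (\<Union>g\<le>t. A i g) (\<Union>g\<le>t. A i' g)"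
      using disj[OF \<open>i' < k\<close>] \<pi> by (intro bij_betw_UNION_disjoint) auto
    show "\<pi> i = i'"
      using \<pi>[of t] by (simp add: A_def bij_betw_def)
    show "\<pi> ` rg i g = rg i' g" if "g < t" for g
      using \<pi>[of g] that by (simp add: A_def bij_betw_def)
  qed
  then show thesis ..
qed

lemma ex_copies_relabellings:
  assumes "rt_availability n k G r t rg" "i < k" "\<And>m. m \<le> J \<Longrightarrow> c m < k"
  obtains \<pi> where "\<And>m. m \<le> J \<Longrightarrow> copies_relabelling rg t i (c m) (\<pi> m)"
proof -
  have "\<forall>m. \<exists>\<pi>. m \<le> J \<longrightarrow> copies_relabelling rg t i (c m) \<pi>"
    using ex_copies_relabelling[OF assms(1,2)] assms(3) by metis
  then show thesis
    using that by metis
qed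

definition timing_idx :: "(nat \<Rightarrow> nat \<Rightarrow> nat set) \<Rightarrow> nat \<Rightarrow> nat \<Rightarrow> nat \<Rightarrow> rv_idx set" where
  "timing_idx rg t i J = Inter ` {..J} \<union> (\<lambda>(m, s). Serv m s) ` ({..J} \<times> copies rg t i)"

definition relabel :: "(nat \<Rightarrow> nat \<Rightarrow> nat) \<Rightarrow> rv_idx \<Rightarrow> rv_idx" where
  "relabel \<pi> idx = (case idx of Serv m s \<Rightarrow> Serv m (\<pi> m s) | _ \<Rightarrow> idx)"

definition sm_time_of :: "(nat \<Rightarrow> nat \<Rightarrow> nat set) \<Rightarrow> nat \<Rightarrow> nat \<Rightarrow> nat \<Rightarrow> (rv_idx \<Rightarrow> real) \<Rightarrow> real" where
  "sm_time_of rg t i J = sm_time rg t (\<lambda>m w. w (Inter m)) (\<lambda>m s w. w (Serv m s)) (\<lambda>m w. i) J"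

lemma sm_time_relabel:
  assumes groups: "finite_nonempty_groups rg t i" "\<And>m. m \<le> J \<Longrightarrow> finite_nonempty_groups rg t (C m \<omega>)"
    and \<pi>: "\<And>m. m \<le> J \<Longrightarrow> copies_relabelling rg t i (C m \<omega>) (\<pi> m)"
  shows "sm_time rg t X S C J \<omega>
    = sm_time_of rg t i J (\<lambda>idx\<in>timing_idx rg t i J. prim_family X S C' (relabel \<pi> idx) \<omega>)"
proof -
  define w where "w = (\<lambda>idx\<in>timing_idx rg t i J. prim_family X S C' (relabel \<pi> idx) \<omega>)"
  have arrivals: "arrivals X \<omega> m = arrivals (\<lambda>m w. w (Inter m)) w m" if "m \<le> J" for m
    unfolding arrivals_def w_def using that
    by (intro sum.cong) (auto simp: timing_idx_def relabel_def prim_family_def)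
  have "fj_service rg t (\<lambda>m s. S m s \<omega>) (\<lambda>m. C m \<omega>) m = fj_service rg t (\<lambda>m s. w (Serv m s)) (\<lambda>_. i) m"
    if "m \<le> J" for m
    using that by (intro fj_service_relabel[where c="\<lambda>m. C m \<omega>", symmetric])
      (auto simp: \<pi> w_def timing_idx_def relabel_def prim_family_def)
  then have "sm_free rg t (arrivals X \<omega>) (\<lambda>m s. S m s \<omega>) (\<lambda>m. C m \<omega>) (Suc J)
      = sm_free rg t (arrivals (\<lambda>m w. w (Inter m)) w) (\<lambda>m s. w (Serv m s)) (\<lambda>_. i) (Suc J)"
    using groups arrivals by (intro sm_free_eq_by_service) auto
  then show ?thesis
    unfolding sm_time_def sm_time_of_def sm_depart_def w_def[symmetric] using arrivals by simp
qed

section \<open>Measurability\<close>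

(* B is arbitrary because rg i g is only known to be finite for i < k, whereas the requested object
   is an arbitrary natural number; on the outcomes where the image is infinite, MAX is the junk
   value the None. *)
lemma borel_measurable_Max_image:
  fixes h :: "nat \<Rightarrow> 'a \<Rightarrow> real"
  assumes h: "\<And>s. h s \<in> borel_measurable N"
  shows "(\<lambda>\<omega>. MAX s\<in>B. h s \<omega>) \<in> borel_measurable N"
proof -
  define Q where "Q m \<omega> \<longleftrightarrow> (\<forall>s\<in>B. \<exists>s'\<in>B \<inter> {..m}. h s \<omega> = h s' \<omega>)" for m \<omega>
  have Q_pred: "Measurable.pred N (Q m)" for m
    unfolding Q_def using h by measurable
  have image_eq: "(\<lambda>s. h s \<omega>) ` B = (\<lambda>s. h s \<omega>) ` (B \<inter> {..m})" if "Q m \<omega>" for m \<omega>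
    using that unfolding Q_def by force
  have ex_Q: "\<exists>m. Q m \<omega>" if fin: "finite ((\<lambda>s. h s \<omega>) ` B)" for \<omega>
  proof -
    obtain F where F: "F \<subseteq> B" "finite F" "(\<lambda>s. h s \<omega>) ` B = (\<lambda>s. h s \<omega>) ` F"
      using finite_subset_image[OF fin order.refl] by blast
    obtain m where m: "F \<subseteq> {..m}"
      using F(2) finite_nat_iff_bounded_le by blast
    have "Q m \<omega>"
      unfolding Q_def
    proof
      fix s assume "s \<in> B"
      then have "h s \<omega> \<in> (\<lambda>s. h s \<omega>) ` F"
        using F(3) by blast
      then show "\<exists>s'\<in>B \<inter> {..m}. h s \<omega> = h s' \<omega>"
        using F(1) m by blast
    qed
    then show ?thesis ..
  qed
  have eq: "(MAX s\<in>B. h s \<omega>) = (if \<exists>m. Q m \<omega> then MAX s\<in>B \<inter> {..LEAST m. Q m \<omega>}. h s \<omega> else the None)" for \<omega>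
  proof (cases "\<exists>m. Q m \<omega>")
    case True
    then show ?thesis using image_eq[OF LeastI_ex[OF True]] by simp
  next
    case False
    then show ?thesis using ex_Q Max.infinite by auto
  qed
  have "(\<lambda>\<omega>. MAX s\<in>B \<inter> {..LEAST m. Q m \<omega>}. h s \<omega>) \<in> borel_measurable N"
  proof (rule measurable_compose_countable[where f="\<lambda>m \<omega>. MAX s\<in>B \<inter> {..m}. h s \<omega>"])
    show "(\<lambda>\<omega>. MAX s\<in>B \<inter> {..m}. h s \<omega>) \<in> borel_measurable N" for m
      using h by (intro borel_measurable_Max) auto
    show "(\<lambda>\<omega>. LEAST m. Q m \<omega>) \<in> measurable N (count_space UNIV)"
      using Q_pred by (intro measurable_Least) auto
  qed
  then have "(\<lambda>\<omega>. if \<exists>m. Q m \<omega> then MAX s\<in>B \<inter> {..LEAST m. Q m \<omega>}. h s \<omega> else the None) \<in> borel_measurable N"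
    using Q_pred by measurable
  then show ?thesis
    unfolding eq .
qed

lemma fj_dep_measurable:
  fixes a :: "nat \<Rightarrow> 'a \<Rightarrow> real" and sv :: "nat \<Rightarrow> nat \<Rightarrow> 'a \<Rightarrow> real" and c :: "nat \<Rightarrow> 'a \<Rightarrow> nat"
  assumes [measurable]: "a j \<in> borel_measurable N" "\<And>s. sv j s \<in> borel_measurable N"
    "c j \<in> measurable N (count_space UNIV)" "F \<in> borel_measurable N"
  shows "(\<lambda>\<omega>. fj_dep rg t (\<lambda>m. a m \<omega>) (\<lambda>m s. sv m s \<omega>) (\<lambda>m. c m \<omega>) (\<lambda>_. F \<omega>) j) \<in> borel_measurable N"
proof -
  define fin where "fin s \<omega> = max (a j \<omega>) (F \<omega>) + sv j s \<omega>" for s \<omega>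
  have [measurable]: "fin s \<in> borel_measurable N" for s
    unfolding fin_def by measurable
  define H where "H i \<omega> = min (fin i \<omega>) (MIN g\<in>{..<t}. MAX s\<in>rg i g. fin s \<omega>)" for i \<omega>
  have "H i \<in> borel_measurable N" for i
    unfolding H_def by (intro borel_measurable_min borel_measurable_Min borel_measurable_Max_image) auto
  then have "(\<lambda>\<omega>. H (c j \<omega>) \<omega>) \<in> borel_measurable N"
    by (rule measurable_compose_countable) measurable
  then show ?thesis
    unfolding fj_dep_def H_def fin_def fj_fin_def by simp
qed

lemma sm_free_measurable:
  fixes a :: "nat \<Rightarrow> 'a \<Rightarrow> real" and sv :: "nat \<Rightarrow> nat \<Rightarrow> 'a \<Rightarrow> real" and c :: "nat \<Rightarrow> 'a \<Rightarrow> nat"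
  assumes "\<And>m. a m \<in> borel_measurable N" "\<And>m s. sv m s \<in> borel_measurable N"
    and "\<And>m. c m \<in> measurable N (count_space UNIV)"
  shows "(\<lambda>\<omega>. sm_free rg t (\<lambda>m. a m \<omega>) (\<lambda>m s. sv m s \<omega>) (\<lambda>m. c m \<omega>) j) \<in> borel_measurable N"
proof (induction j)
  case 0
  then show ?case by simp
next
  case (Suc j)
  then show ?case using fj_dep_measurable[OF assms] by simp
qed

lemma sm_time_measurable:
  fixes X :: "nat \<Rightarrow> 'a \<Rightarrow> real" and S :: "nat \<Rightarrow> nat \<Rightarrow> 'a \<Rightarrow> real" and C :: "nat \<Rightarrow> 'a \<Rightarrow> nat"
  assumes [measurable]: "\<And>m. X m \<in> borel_measurable N" "\<And>m s. S m s \<in> borel_measurable N"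
    and "\<And>m. C m \<in> measurable N (count_space UNIV)"
  shows "sm_time rg t X S C j \<in> borel_measurable N"
proof -
  have arrivals: "(\<lambda>\<omega>. arrivals X \<omega> m) \<in> borel_measurable N" for m
    unfolding arrivals_def by measurable
  have "(\<lambda>\<omega>. sm_free rg t (arrivals X \<omega>) (\<lambda>m s. S m s \<omega>) (\<lambda>m. C m \<omega>) (Suc j)) \<in> borel_measurable N"
    by (rule sm_free_measurable[OF arrivals]) (use assms in auto)
  then show ?thesis
    unfolding sm_time_def[abs_def] sm_depart_def using arrivals by simp
qed

lemma borel_measurable_PiM_component:
  "(\<lambda>v. v i) \<in> borel_measurable (PiM I (\<lambda>_. borel :: 'b::topological_space measure))"
proof (cases "i \<in> I")
  case True
  then show ?thesis by measurable
next
  case False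
  then have "\<And>v. v \<in> space (PiM I (\<lambda>_. borel)) \<Longrightarrow> v i = undefined"
    by (auto simp: space_PiM PiE_def extensional_def)
  then show ?thesis
    by (subst measurable_cong[where g="\<lambda>_. undefined"]) auto
qed

lemma sm_time_of_measurable: "sm_time_of rg t i J \<in> borel_measurable (PiM I (\<lambda>_. borel))"
  unfolding sm_time_of_def by (rule sm_time_measurable) (auto intro: borel_measurable_PiM_component)

section \<open>The probabilistic model\<close>

lemma (in prob_space) distr_reindex_indep_vars:
  assumes indep: "indep_vars M' Y K" and "K \<noteq> {}" and \<sigma>: "inj_on \<sigma> I" "\<sigma> \<in> I \<rightarrow> K"
  shows "distr M (PiM I (\<lambda>i. M' (\<sigma> i))) (\<lambda>\<omega>. \<lambda>i\<in>I. Y (\<sigma> i) \<omega>)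
    = PiM I (\<lambda>i. distr M (M' (\<sigma> i)) (Y (\<sigma> i)))"
proof -
  have rv: "random_variable (M' k) (Y k)" if "k \<in> K" for k
    using indep that unfolding indep_vars_def by blast
  let ?R = "\<lambda>v. \<lambda>i\<in>I. v (\<sigma> i)"
  have R: "?R \<in> measurable (PiM K M') (PiM I (\<lambda>i. M' (\<sigma> i)))"
    using \<sigma>(2) by (intro measurable_restrict measurable_component_singleton) auto
  have V: "(\<lambda>\<omega>. \<lambda>k\<in>K. Y k \<omega>) \<in> measurable M (PiM K M')"
    using rv by (intro measurable_restrict) auto
  have "(\<lambda>\<omega>. \<lambda>i\<in>I. Y (\<sigma> i) \<omega>) = ?R \<circ> (\<lambda>\<omega>. \<lambda>k\<in>K. Y k \<omega>)"
    using \<sigma>(2) by (auto simp: fun_eq_iff)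
  then have "distr M (PiM I (\<lambda>i. M' (\<sigma> i))) (\<lambda>\<omega>. \<lambda>i\<in>I. Y (\<sigma> i) \<omega>)
      = distr (distr M (PiM K M') (\<lambda>\<omega>. \<lambda>k\<in>K. Y k \<omega>)) (PiM I (\<lambda>i. M' (\<sigma> i))) ?R"
    by (simp only: distr_distr[OF R V])
  also have "\<dots> = distr (PiM K (\<lambda>k. distr M (M' k) (Y k))) (PiM I (\<lambda>i. distr M (M' (\<sigma> i)) (Y (\<sigma> i)))) ?R"
    using indep_vars_iff_distr_eq_PiM'[OF \<open>K \<noteq> {}\<close> rv] indep
    by (intro distr_cong sets_PiM_cong) auto
  also have "\<dots> = PiM I (\<lambda>i. distr M (M' (\<sigma> i)) (Y (\<sigma> i)))"
    using rv by (intro distr_PiM_reindex \<sigma> prob_space_distr) auto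
  finally show ?thesis .
qed

locale fork_join_model = prob_space M for M :: "'w measure" +
  fixes n k r t :: nat and G :: "nat \<Rightarrow> nat \<Rightarrow> 'f::field" and rg :: "nat \<Rightarrow> nat \<Rightarrow> nat set"
    and mu :: real and p :: "nat \<Rightarrow> real" and i0 :: nat
    and X :: "nat \<Rightarrow> 'w \<Rightarrow> real" and S :: "nat \<Rightarrow> nat \<Rightarrow> 'w \<Rightarrow> real" and C :: "nat \<Rightarrow> 'w \<Rightarrow> nat"
  assumes avail: "rt_availability n k G r t rg"
    and r_pos: "1 \<le> r" and t_pos: "1 \<le> t"
    and p_sum: "(\<Sum>i<k. p i) = 1"
    and i0: "i0 < k"
    and indep: "indep_vars (\<lambda>_. borel) (prim_family X S C) UNIV"
    and S_exp: "\<forall>j s. distributed M lborel (S j s) (exponential_density mu)"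
    and C_law: "\<forall>j. \<forall>i<k. measure M {\<omega> \<in> space M. C j \<omega> = i} = p i"
begin

abbreviation prim :: "rv_idx \<Rightarrow> 'w \<Rightarrow> real" where
  "prim \<equiv> prim_family X S C"

lemma random_variable_prim: "random_variable borel (prim idx)"
  using indep unfolding indep_vars_def by auto

lemma X_measurable[measurable]: "X m \<in> borel_measurable M"
  using random_variable_prim[of "Inter m"] by (simp add: prim_family_def[abs_def])

lemma S_measurable[measurable]: "S m s \<in> borel_measurable M"
  using random_variable_prim[of "Serv m s"] by (simp add: prim_family_def[abs_def])

lemma C_measurable[measurable]: "C m \<in> measurable M (count_space UNIV)"
proof (subst measurable_count_space_eq2_countable, intro conjI ballI)
  fix i :: nat
  have "(\<lambda>\<omega>. real (C m \<omega>)) \<in> borel_measurable M"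
    using random_variable_prim[of "Kind m"] by (simp add: prim_family_def[abs_def])
  then have "(\<lambda>\<omega>. real (C m \<omega>)) -` {real i} \<inter> space M \<in> sets M"
    by (rule measurable_sets) simp
  then show "C m -` {i} \<inter> space M \<in> sets M"
    by (simp add: vimage_def)
qed simp

lemma finite_nonempty_groups_object: "i < k \<Longrightarrow> finite_nonempty_groups rg t i"
  using finite_nonempty_groups_if_availability[OF avail r_pos t_pos] .

lemma distr_S: "distr M borel (S m s) = density lborel (exponential_density mu)"
proof -
  have "distr M borel (S m s) = distr M lborel (S m s)"
    by (rule distr_cong) auto
  then show ?thesis
    using S_exp by (simp add: distributed_distr_eq_density)
qed

lemma AE_S_nonneg: "AE \<omega> in M. \<forall>m s. 0 \<le> S m s \<omega>"
proof -
  have "AE \<omega> in M. 0 \<le> S m s \<omega>" for m s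
  proof -
    have "emeasure (distr M borel (S m s)) {..<0} = 0"
      unfolding distr_S by (subst emeasure_density) (auto simp: exponential_density_def indicator_def
          intro!: nn_integral_zero')
    then have "emeasure M (S m s -` {..<0} \<inter> space M) = 0"
      by (subst (asm) emeasure_distr) auto
    then show ?thesis
      by (intro AE_I[of _ _ "S m s -` {..<0} \<inter> space M"]) auto
  qed
  then show ?thesis
    by (simp add: AE_all_countable)
qed

lemma AE_C_less: "AE \<omega> in M. \<forall>m. C m \<omega> < k"
proof -
  have "prob {\<omega> \<in> space M. C m \<omega> < k} = 1" for m
  proof -
    have "{\<omega> \<in> space M. C m \<omega> < k} = (\<Union>i<k. {\<omega> \<in> space M. C m \<omega> = i})"
      by auto
    then have "prob {\<omega> \<in> space M. C m \<omega> < k} = (\<Sum>i<k. prob {\<omega> \<in> space M. C m \<omega> = i})"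
      by (simp, intro finite_measure_finite_Union) (auto simp: disjoint_family_on_def)
    then show ?thesis
      using C_law p_sum by simp
  qed
  then have "AE \<omega> in M. \<omega> \<in> {\<omega> \<in> space M. C m \<omega> < k}" for m
    by (subst AE_in_set_eq_1) auto
  then have "AE \<omega> in M. C m \<omega> < k" for m
    by (rule AE_mp) auto
  then show ?thesis
    by (simp add: AE_all_countable)
qed

lemma fj_tail_le_sm_tail:
  assumes "AE \<omega> in M. \<forall>m. C' m \<omega> < k" "\<And>m. C' m \<in> measurable M (count_space UNIV)"
  shows "prob {\<omega> \<in> space M. x < fj_time rg t X S C' j \<omega>} \<le> prob {\<omega> \<in> space M. x < sm_time rg t X S C' j \<omega>}"
proof (rule finite_measure_mono_AE)
  have "sm_time rg t X S C' j \<in> borel_measurable M"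
    by (rule sm_time_measurable) (use assms(2) in auto)
  then show "{\<omega> \<in> space M. x < sm_time rg t X S C' j \<omega>} \<in> sets M"
    by measurable
  show "AE \<omega> in M. \<omega> \<in> {\<omega> \<in> space M. x < fj_time rg t X S C' j \<omega>} \<longrightarrow> \<omega> \<in> {\<omega> \<in> space M. x < sm_time rg t X S C' j \<omega>}"
    using AE_S_nonneg assms(1)
  proof eventually_elim
    case (elim \<omega>)
    then have "fj_depart rg t (arrivals X \<omega>) (\<lambda>j s. S j s \<omega>) (\<lambda>j. C' j \<omega>) j
        \<le> sm_depart rg t (arrivals X \<omega>) (\<lambda>j s. S j s \<omega>) (\<lambda>j. C' j \<omega>) j"
      by (intro fj_depart_le_sm_depart finite_nonempty_groups_object) auto
    then show ?case
      unfolding fj_time_def sm_time_def by auto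
  qed
qed

lemma prob_relabelled_timings:
  assumes inj: "\<And>m. m \<le> J \<Longrightarrow> inj_on (\<pi> m) (copies rg t i0)"
    and A: "A \<in> sets (PiM (timing_idx rg t i0 J) (\<lambda>_. borel))"
  shows "prob ((\<lambda>\<omega>. \<lambda>idx\<in>timing_idx rg t i0 J. prim (relabel \<pi> idx) \<omega>) -` A \<inter> space M)
    = measure (PiM (timing_idx rg t i0 J) (\<lambda>idx. distr M borel (prim idx))) A"
proof -
  let ?I = "timing_idx rg t i0 J"
  let ?W = "\<lambda>\<omega>. \<lambda>idx\<in>?I. prim (relabel \<pi> idx) \<omega>"
  have "inj_on (relabel \<pi>) ?I"
    using inj by (auto simp: inj_on_def timing_idx_def relabel_def)
  then have "distr M (PiM ?I (\<lambda>_. borel)) ?W = PiM ?I (\<lambda>idx. distr M borel (prim (relabel \<pi> idx)))"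
    using distr_reindex_indep_vars[OF indep UNIV_not_empty] by simp
  also have "\<dots> = PiM ?I (\<lambda>idx. distr M borel (prim idx))"
    by (intro PiM_cong) (auto simp: timing_idx_def relabel_def prim_family_def[abs_def] distr_S)
  finally show ?thesis
    using measure_distr[OF _ A, of ?W M] random_variable_prim by (simp add: measurable_restrict)
qed

lemma indep_relabelled_timings_kinds:
  "indep_var (PiM (timing_idx rg t i J) (\<lambda>_. borel)) (\<lambda>\<omega>. \<lambda>idx\<in>timing_idx rg t i J. prim (relabel \<pi> idx) \<omega>)
     (PiM (Kind ` {..J}) (\<lambda>_. borel)) (\<lambda>\<omega>. \<lambda>idx\<in>Kind ` {..J}. prim idx \<omega>)"
proof -
  let ?I = "timing_idx rg t i J" and ?K = "Kind ` {..J}"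
  let ?R = "\<lambda>v. \<lambda>idx\<in>?I. v (relabel \<pi> idx)"
  have "relabel \<pi> ` ?I \<inter> ?K = {}"
    by (auto simp: timing_idx_def relabel_def)
  then have "indep_var (PiM (relabel \<pi> ` ?I) (\<lambda>_. borel)) (\<lambda>\<omega>. \<lambda>idx\<in>relabel \<pi> ` ?I. prim idx \<omega>)
      (PiM ?K (\<lambda>_. borel)) (\<lambda>\<omega>. \<lambda>idx\<in>?K. prim idx \<omega>)"
    using indep by (intro indep_var_restrict) auto
  moreover have "?R \<in> measurable (PiM (relabel \<pi> ` ?I) (\<lambda>_. borel)) (PiM ?I (\<lambda>_. borel))"
    by (intro measurable_restrict measurable_component_singleton) auto
  ultimately have "indep_var (PiM ?I (\<lambda>_. borel)) (?R \<circ> (\<lambda>\<omega>. \<lambda>idx\<in>relabel \<pi> ` ?I. prim idx \<omega>))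
      (PiM ?K (\<lambda>_. borel)) (id \<circ> (\<lambda>\<omega>. \<lambda>idx\<in>?K. prim idx \<omega>))"
    by (intro indep_var_compose) auto
  moreover have "?R \<circ> (\<lambda>\<omega>. \<lambda>idx\<in>relabel \<pi> ` ?I. prim idx \<omega>) = (\<lambda>\<omega>. \<lambda>idx\<in>?I. prim (relabel \<pi> idx) \<omega>)"
    by (auto simp: fun_eq_iff)
  ultimately show ?thesis
    by simp
qed

definition product_law_sm_tail :: "nat \<Rightarrow> real \<Rightarrow> real" where
  "product_law_sm_tail J x = measure (PiM (timing_idx rg t i0 J) (\<lambda>idx. distr M borel (prim idx)))
     {w \<in> space (PiM (timing_idx rg t i0 J) (\<lambda>_. borel)). x < sm_time_of rg t i0 J w}"

lemma prob_sm_tail_and_kinds: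
  assumes c: "c \<in> PiE {..J} (\<lambda>_. {..<k})"
  shows "prob ({\<omega> \<in> space M. x < sm_time rg t X S C J \<omega>} \<inter> {\<omega> \<in> space M. \<forall>m\<le>J. C m \<omega> = c m})
    = product_law_sm_tail J x * prob {\<omega> \<in> space M. \<forall>m\<le>J. C m \<omega> = c m}"
proof -
  obtain \<pi> where \<pi>: "\<And>m. m \<le> J \<Longrightarrow> copies_relabelling rg t i0 (c m) (\<pi> m)"
    using ex_copies_relabellings[OF avail i0, of J c] c by (metis PiE_mem atMost_iff lessThan_iff)
  let ?I = "timing_idx rg t i0 J" and ?K = "Kind ` {..J}"
  define W where "W \<omega> = (\<lambda>idx\<in>?I. prim (relabel \<pi> idx) \<omega>)" for \<omega>
  define V where "V \<omega> = (\<lambda>idx\<in>?K. prim idx \<omega>)" for \<omega>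
  define A where "A = {w \<in> space (PiM ?I (\<lambda>_. borel)). x < sm_time_of rg t i0 J w}"
  define B where "B = {v \<in> space (PiM ?K (\<lambda>_. borel)). \<forall>m\<le>J. v (Kind m) = real (c m)}"
  have A_sets: "A \<in> sets (PiM ?I (\<lambda>_. borel))"
    unfolding A_def using sm_time_of_measurable by measurable
  have B_sets: "B \<in> sets (PiM ?K (\<lambda>_. borel))"
    unfolding B_def using borel_measurable_PiM_component by measurable
  have V_iff: "V \<omega> \<in> B \<longleftrightarrow> (\<forall>m\<le>J. C m \<omega> = c m)" for \<omega>
    by (auto simp: V_def B_def space_PiM prim_family_def)
  have "{\<omega> \<in> space M. x < sm_time rg t X S C J \<omega>} \<inter> {\<omega> \<in> space M. \<forall>m\<le>J. C m \<omega> = c m}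
      = (\<lambda>\<omega>. (W \<omega>, V \<omega>)) -` (A \<times> B) \<inter> space M"
  proof -
    have "sm_time rg t X S C J \<omega> = sm_time_of rg t i0 J (W \<omega>)" if "\<forall>m\<le>J. C m \<omega> = c m" for \<omega>
      unfolding W_def using that c \<pi> by (intro sm_time_relabel finite_nonempty_groups_object i0) auto
    then show ?thesis
      using V_iff by (auto simp: A_def W_def space_PiM)
  qed
  also have "prob \<dots> = prob (W -` A \<inter> space M) * prob (V -` B \<inter> space M)"
    unfolding W_def V_def by (rule indep_varD[OF indep_relabelled_timings_kinds A_sets B_sets])
  also have "prob (W -` A \<inter> space M) = product_law_sm_tail J x"
    unfolding W_def product_law_sm_tail_def A_def[symmetric]
    using \<pi> A_sets by (intro prob_relabelled_timings) (auto simp: copies_relabelling_def bij_betw_def)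
  also have "V -` B \<inter> space M = {\<omega> \<in> space M. \<forall>m\<le>J. C m \<omega> = c m}"
    using V_iff by auto
  finally show ?thesis .
qed

lemma prob_eq_sum_kinds:
  assumes "A \<in> sets M"
  shows "prob A = (\<Sum>c\<in>PiE {..J} (\<lambda>_. {..<k}). prob (A \<inter> {\<omega> \<in> space M. \<forall>m\<le>J. C m \<omega> = c m}))"
proof -
  let ?E = "\<lambda>c. {\<omega> \<in> space M. \<forall>m\<le>J. C m \<omega> = c m}"
  have E_sets: "?E c \<in> sets M" for c
    by measurable
  have "prob A = prob (\<Union>c\<in>PiE {..J} (\<lambda>_. {..<k}). A \<inter> ?E c)"
  proof (rule measure_eq_AE)
    show "AE \<omega> in M. \<omega> \<in> A \<longleftrightarrow> \<omega> \<in> (\<Union>c\<in>PiE {..J} (\<lambda>_. {..<k}). A \<inter> ?E c)"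
      using AE_C_less AE_space
    proof eventually_elim
      case (elim \<omega>)
      then have "restrict (\<lambda>m. C m \<omega>) {..J} \<in> PiE {..J} (\<lambda>_. {..<k})" "\<omega> \<in> ?E (restrict (\<lambda>m. C m \<omega>) {..J})"
        by auto
      then show ?case
        by blast
    qed
  qed (use assms E_sets in \<open>auto intro!: sets.Int sets.finite_UN finite_PiE\<close>)
  also have "\<dots> = (\<Sum>c\<in>PiE {..J} (\<lambda>_. {..<k}). prob (A \<inter> ?E c))"
  proof (intro finite_measure_finite_Union finite_PiE)
    show "disjoint_family_on (\<lambda>c. A \<inter> ?E c) (PiE {..J} (\<lambda>_. {..<k}))"
      unfolding disjoint_family_on_def
    proof (intro ballI impI)
      fix c c' assume "c \<in> PiE {..J} (\<lambda>_. {..<k})" "c' \<in> PiE {..J} (\<lambda>_. {..<k})" "c \<noteq> c'"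
      then obtain m where "m \<le> J" "c m \<noteq> c' m"
        using PiE_ext by (metis atMost_iff)
      then show "(A \<inter> ?E c) \<inter> (A \<inter> ?E c') = {}"
        by auto
    qed
  qed (use assms E_sets in auto)
  finally show ?thesis .
qed

lemma prob_sm_tail_eq_product_law:
  "prob {\<omega> \<in> space M. x < sm_time rg t X S C J \<omega>} = product_law_sm_tail J x"
proof -
  let ?K = "PiE {..J} (\<lambda>_. {..<k})" and ?E = "\<lambda>c. {\<omega> \<in> space M. \<forall>m\<le>J. C m \<omega> = c m}"
  have "sm_time rg t X S C J \<in> borel_measurable M"
    by (rule sm_time_measurable) auto
  then have "prob {\<omega> \<in> space M. x < sm_time rg t X S C J \<omega>}
      = (\<Sum>c\<in>?K. prob ({\<omega> \<in> space M. x < sm_time rg t X S C J \<omega>} \<inter> ?E c))"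
    by (intro prob_eq_sum_kinds) measurable
  also have "\<dots> = product_law_sm_tail J x * (\<Sum>c\<in>?K. prob (space M \<inter> ?E c))"
    by (simp add: prob_sm_tail_and_kinds sum_distrib_left Int_absorb1)
  also have "(\<Sum>c\<in>?K. prob (space M \<inter> ?E c)) = 1"
    using prob_eq_sum_kinds[OF sets.top, of J] prob_space by simp
  finally show ?thesis
    by simp
qed

lemma prob_fa_sm_tail_eq_product_law:
  "prob {\<omega> \<in> space M. x < sm_time rg t X S (\<lambda>_ _. i0) J \<omega>} = product_law_sm_tail J x"
proof -
  let ?I = "timing_idx rg t i0 J"
  have "copies_relabelling rg t i0 i0 id"
    by (simp add: copies_relabelling_def)
  then have "sm_time rg t X S (\<lambda>_ _. i0) J \<omega> = sm_time_of rg t i0 J (\<lambda>idx\<in>?I. prim (relabel (\<lambda>_. id) idx) \<omega>)" for \<omega>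
    by (intro sm_time_relabel finite_nonempty_groups_object i0)
  then have "{\<omega> \<in> space M. x < sm_time rg t X S (\<lambda>_ _. i0) J \<omega>}
      = (\<lambda>\<omega>. \<lambda>idx\<in>?I. prim (relabel (\<lambda>_. id) idx) \<omega>) -` {w \<in> space (PiM ?I (\<lambda>_. borel)). x < sm_time_of rg t i0 J w} \<inter> space M"
    by (auto simp: space_PiM)
  then show ?thesis
    unfolding product_law_sm_tail_def using sm_time_of_measurable
    by (simp only:) (intro prob_relabelled_timings; measurable)
qed

lemma prob_sm_tail_eq_fa_sm_tail:
  "prob {\<omega> \<in> space M. x < sm_time rg t X S C J \<omega>} = prob {\<omega> \<in> space M. x < sm_time rg t X S (\<lambda>_ _. i0) J \<omega>}"
  unfolding prob_sm_tail_eq_product_law prob_fa_sm_tail_eq_product_law ..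

end

theorem lemma5:
  fixes M :: "'w measure"
    and n k r t :: nat
    and G :: "nat \<Rightarrow> nat \<Rightarrow> 'f::field"
    and rg :: "nat \<Rightarrow> nat \<Rightarrow> nat set"
    and lam mu :: real
    and p :: "nat \<Rightarrow> real"
    and i0 :: nat
    and X :: "nat \<Rightarrow> 'w \<Rightarrow> real"
    and S :: "nat \<Rightarrow> nat \<Rightarrow> 'w \<Rightarrow> real"
    and C :: "nat \<Rightarrow> 'w \<Rightarrow> nat"
  assumes code: "systematic_code n k G"
    and avail: "rt_availability n k G r t rg"
    and r_pos: "1 \<le> r" and t_pos: "1 \<le> t"
    and lam_pos: "0 < lam" and mu_pos: "0 < mu"
    and p_nonneg: "\<forall>i<k. 0 \<le> p i" and p_sum: "(\<Sum>i<k. p i) = 1"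
    and i0: "i0 < k"
    and M: "prob_space M"
    and indep: "prob_space.indep_vars M (\<lambda>_. borel) (prim_family X S C) UNIV"
    and X_exp: "\<forall>j. distributed M lborel (X j) (exponential_density lam)"
    and S_exp: "\<forall>j s. distributed M lborel (S j s) (exponential_density mu)"
    and C_law: "\<forall>j. \<forall>i<k. measure M {\<omega> \<in> space M. C j \<omega> = i} = p i"
    and stable_GA: "has_steady_state M (fj_time rg t X S C)"
    and stable_FA: "has_steady_state M (fj_time rg t X S (\<lambda>j \<omega>. i0))"
    and stable_SM: "has_steady_state M (sm_time rg t X S C)"
  shows "\<forall>x\<ge>0.
           steady_tail M (fj_time rg t X S C) x \<le> steady_tail M (sm_time rg t X S C) x \<and>
           steady_tail M (fj_time rg t X S (\<lambda>j \<omega>. i0)) x \<le> steady_tail M (sm_time rg t X S C) x"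
proof (intro allI impI)
  interpret fork_join_model M n k r t G rg mu p i0 X S C
    by (intro fork_join_model.intro fork_join_model_axioms.intro M avail r_pos t_pos p_sum i0 indep S_exp C_law)
  fix x :: real
  assume "0 \<le> x"
  then have tail_lim: "(\<lambda>j. prob {\<omega> \<in> space M. x < T j \<omega>}) \<longlonglongrightarrow> steady_tail M T x"
    if "has_steady_state M T" for T
    using that unfolding has_steady_state_def steady_tail_def by (simp add: convergent_LIMSEQ_iff)
  have "prob {\<omega> \<in> space M. x < fj_time rg t X S C j \<omega>} \<le> prob {\<omega> \<in> space M. x < sm_time rg t X S C j \<omega>}"
    for j by (rule fj_tail_le_sm_tail[OF AE_C_less C_measurable])
  moreover have "prob {\<omega> \<in> space M. x < fj_time rg t X S (\<lambda>_ _. i0) j \<omega>} \<le> prob {\<omega> \<in> space M. x < sm_time rg t X S C j \<omega>}"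
    for j
    using fj_tail_le_sm_tail[of "\<lambda>_ _. i0" x j] i0 prob_sm_tail_eq_fa_sm_tail[of x j] by simp
  ultimately show "steady_tail M (fj_time rg t X S C) x \<le> steady_tail M (sm_time rg t X S C) x \<and>
      steady_tail M (fj_time rg t X S (\<lambda>j \<omega>. i0)) x \<le> steady_tail M (sm_time rg t X S C) x"
    by (auto intro!: LIMSEQ_le[OF tail_lim[OF stable_GA] tail_lim[OF stable_SM]]
        LIMSEQ_le[OF tail_lim[OF stable_FA] tail_lim[OF stable_SM]])
qed

end
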